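(* Let $r>0$, $\alpha\in(0,1]$, $K>0$, $\delta>0$, $\sigma>0$, and consider the system \[ \dot p = rm\Big(1-\frac{p+m}{K}\Big)-\delta p,\qquad \dot m=\alpha r p\Big(1-\frac{p+m}{K}\Big)-\sigma m \] on $\Omega=\{(p,m)\in\mathbb{R}^2:\ p\ge0,\ m\ge0,\ p+m\le K\}$. If $R_0=r\sqrt{\alpha/(\delta\sigma)}\le 1$, then the equilibrium $E_0=(0,0)$ is globally asymptotically stable in $\Omega$. *)

theory Defs
  imports "HOL-Analysis.Analysis"
begin

definition is_solution :: "(real \<times> real \<Rightarrow> real \<times> real) \<Rightarrow> (real \<Rightarrow> real \<times> real) \<Rightarrow> bool" where
  "is_solution F x \<longleftrightarrow>
     (\<forall>t\<ge>0. (x has_vector_derivative F (x t)) (at t within {0..}))"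

definition is_equilibrium :: "(real \<times> real \<Rightarrow> real \<times> real) \<Rightarrow> real \<times> real \<Rightarrow> bool" where
  "is_equilibrium F e \<longleftrightarrow> F e = 0"

definition stable_in :: "(real \<times> real \<Rightarrow> real \<times> real) \<Rightarrow> (real \<times> real) set \<Rightarrow> real \<times> real \<Rightarrow> bool" where
  "stable_in F S e \<longleftrightarrow>
     (\<forall>\<epsilon>>0. \<exists>\<eta>>0. \<forall>x. is_solution F x \<and> x 0 \<in> S \<and> dist (x 0) e < \<eta>
        \<longrightarrow> (\<forall>t\<ge>0. dist (x t) e < \<epsilon>))"

definition globally_attractive_in :: "(real \<times> real \<Rightarrow> real \<times> real) \<Rightarrow> (real \<times> real) set \<Rightarrow> real \<times> real \<Rightarrow> bool" where
  "globally_attractive_in F S e \<longleftrightarrow>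
     (\<forall>x. is_solution F x \<and> x 0 \<in> S \<longrightarrow> (x \<longlongrightarrow> e) at_top)"

definition globally_asymptotically_stable_in ::
  "(real \<times> real \<Rightarrow> real \<times> real) \<Rightarrow> (real \<times> real) set \<Rightarrow> real \<times> real \<Rightarrow> bool" where
  "globally_asymptotically_stable_in F S e \<longleftrightarrow>
     e \<in> S \<and> is_equilibrium F e \<and> stable_in F S e \<and> globally_attractive_in F S e"

definition pm_field :: "real \<Rightarrow> real \<Rightarrow> real \<Rightarrow> real \<Rightarrow> real \<Rightarrow> real \<times> real \<Rightarrow> real \<times> real" where
  "pm_field r \<alpha> K \<delta> \<sigma> = (\<lambda>(p, m).
     (r * m * (1 - (p + m) / K) - \<delta> * p,
      \<alpha> * r * p * (1 - (p + m) / K) - \<sigma> * m))"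

definition Omega :: "real \<Rightarrow> (real \<times> real) set" where
  "Omega K = {(p, m). p \<ge> 0 \<and> m \<ge> 0 \<and> p + m \<le> K}"

end

theory Submission
  imports Defs
begin

text \<open>
  First, \<open>\<Omega>\<close> is forward invariant. The penalty
  \<open>N = (p\<^sup>-)\<^sup>2 + (m\<^sup>-)\<^sup>2 + ((p + m - K)\<^sup>+)\<^sup>2\<close> vanishes exactly on \<open>\<Omega>\<close>, and as long as a
  solution stays in a box \<open>|p|, |m| \<le> B\<close> every term of \<open>N'\<close> is either nonpositive or a
  product of two of the three violations with a coefficient bounded in terms of \<open>B\<close>; hence \<open>N' \<le> 2 L N\<close>
  and Gronwall's inequality keeps \<open>N = 0\<close> on every compact time interval. No uniqueness
  of solutions is needed.

  Second, \<open>V(p, m) = \<sigma> p + r m\<close> is a Lyapunov function on \<open>\<Omega>\<close>: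
  \<open>V' = p (\<alpha> r\<^sup>2 - \<sigma> \<delta>) - (p + m)/K \<cdot> (\<sigma> r m + \<alpha> r\<^sup>2 p)\<close>, and \<open>R\<^sub>0 \<le> 1\<close> says exactly
  \<open>\<alpha> r\<^sup>2 \<le> \<sigma> \<delta>\<close>, so \<open>V' \<le> -(\<mu>/K) (p + m)\<^sup>2 \<le> -k V\<^sup>2\<close>. Since \<open>V\<close> is comparable to the
  norm on \<open>\<Omega>\<close>, monotonicity of \<open>V\<close> gives stability and the decay \<open>V' \<le> -k V\<^sup>2\<close> gives
  convergence to the origin.
\<close>

lemma has_vector_derivative_fst:
  assumes "(x has_vector_derivative v) (at t within S)"
  shows "((\<lambda>t. fst (x t)) has_real_derivative fst v) (at t within S)"
  using has_derivative_fst[OF assms[unfolded has_vector_derivative_def]]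
  by (simp add: has_real_derivative_iff_has_vector_derivative has_vector_derivative_def)

lemma has_vector_derivative_snd:
  assumes "(x has_vector_derivative v) (at t within S)"
  shows "((\<lambda>t. snd (x t)) has_real_derivative snd v) (at t within S)"
  using has_derivative_snd[OF assms[unfolded has_vector_derivative_def]]
  by (simp add: has_real_derivative_iff_has_vector_derivative has_vector_derivative_def)

lemma DERIV_max0_square: "((\<lambda>y::real. (max y 0)\<^sup>2) has_real_derivative 2 * max y 0) (at y)"
proof (cases "y = 0")
  case True
  have "((\<lambda>z::real. max z 0) \<longlongrightarrow> max 0 0) (at 0)"
    by (intro tendsto_max tendsto_ident_at tendsto_const)
  then have "((\<lambda>z::real. max z 0) \<longlongrightarrow> 0) (at 0)"
    by simp
  moreover have "\<forall>\<^sub>F z in at (0::real). max z 0 = ((max z 0)\<^sup>2 - (max 0 0)\<^sup>2) / (z - 0)"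
    by (intro always_eventually) (auto simp: max_def power2_eq_square)
  ultimately have "((\<lambda>z. ((max z 0)\<^sup>2 - (max 0 0)\<^sup>2) / (z - 0)) \<longlongrightarrow> 0) (at (0::real))"
    by (rule Lim_transform_eventually)
  then show ?thesis
    using True by (simp add: has_field_derivative_iff)
next
  case False
  then consider "y < 0" | "y > 0" by linarith
  then show ?thesis
  proof cases
    case 1
    have "((\<lambda>y. 0) has_real_derivative 2 * max y 0) (at y)"
      using 1 by simp
    then show ?thesis
      by (rule has_field_derivative_transform_within_open[where S="{..<0}"]) (use 1 in auto)
  next
    case 2
    have "((\<lambda>y. y\<^sup>2) has_real_derivative 2 * max y 0) (at y)"
      using 2 by (auto intro!: derivative_eq_intros)
    then show ?thesis
      by (rule has_field_derivative_transform_within_open[where S="{0<..}"]) (use 2 in auto)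
  qed
qed

lemma DERIV_within_nonpos_imp_decreasing:
  fixes f f' :: "real \<Rightarrow> real"
  assumes "a \<le> b" and "{a..b} \<subseteq> S"
    and deriv: "\<And>t. t \<in> {a..b} \<Longrightarrow> (f has_real_derivative f' t) (at t within S)"
    and nonpos: "\<And>t. a < t \<Longrightarrow> t < b \<Longrightarrow> f' t \<le> 0"
  shows "f b \<le> f a"
proof (rule DERIV_nonpos_imp_decreasing_open[OF \<open>a \<le> b\<close>])
  fix t assume t: "a < t" "t < b"
  have "{a<..<b} \<subseteq> interior S"
    by (rule interior_maximal) (use \<open>{a..b} \<subseteq> S\<close> in auto)
  then have "at t within S = at t"
    using t by (intro at_within_interior) auto
  then have "(f has_real_derivative f' t) (at t)"
    using deriv[of t] t by simp
  then show "\<exists>y. (f has_real_derivative y) (at t) \<and> y \<le> 0"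
    using nonpos t by blast
next
  show "continuous_on {a..b} f"
    unfolding continuous_on_eq_continuous_within
  proof
    fix t assume "t \<in> {a..b}"
    from continuous_within_subset[OF DERIV_continuous[OF deriv[OF this]] \<open>{a..b} \<subseteq> S\<close>]
    show "continuous (at t within {a..b}) f" .
  qed
qed

lemma differential_gronwall:
  fixes f f' :: "real \<Rightarrow> real"
  assumes "a \<le> b" and "{a..b} \<subseteq> S"
    and deriv: "\<And>t. t \<in> {a..b} \<Longrightarrow> (f has_real_derivative f' t) (at t within S)"
    and growth: "\<And>t. a < t \<Longrightarrow> t < b \<Longrightarrow> f' t \<le> c * f t"
  shows "f b \<le> f a * exp (c * (b - a))"
proof -
  define g where "g t = f t * exp (- c * t)" for t
  have "g b \<le> g a"
  proof (rule DERIV_within_nonpos_imp_decreasing[OF assms(1,2)])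
    fix t assume "t \<in> {a..b}"
    show "(g has_real_derivative (f' t - c * f t) * exp (- c * t)) (at t within S)"
      unfolding g_def using deriv[OF \<open>t \<in> {a..b}\<close>]
      by (auto intro!: derivative_eq_intros simp: algebra_simps)
  next
    fix t assume "a < t" "t < b"
    then show "(f' t - c * f t) * exp (- c * t) \<le> 0"
      using growth by (simp add: mult_nonpos_nonneg)
  qed
  then show ?thesis
    by (simp add: g_def exp_diff exp_minus field_simps)
qed

lemma DERIV_within_le_imp_increment_le:
  fixes f f' :: "real \<Rightarrow> real"
  assumes "a \<le> b" and "{a..b} \<subseteq> S"
    and deriv: "\<And>t. t \<in> {a..b} \<Longrightarrow> (f has_real_derivative f' t) (at t within S)"
    and bound: "\<And>t. a < t \<Longrightarrow> t < b \<Longrightarrow> f' t \<le> c"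
  shows "f b - f a \<le> c * (b - a)"
proof -
  have "f b - c * b \<le> f a - c * a"
  proof (rule DERIV_within_nonpos_imp_decreasing[OF assms(1,2)])
    fix t assume "t \<in> {a..b}"
    then show "((\<lambda>t. f t - c * t) has_real_derivative f' t - c) (at t within S)"
      by (auto intro!: derivative_eq_intros deriv)
  qed (use bound in auto)
  then show ?thesis
    by (simp add: algebra_simps)
qed

lemma tendsto_zero_of_DERIV_le_neg_square:
  fixes v v' :: "real \<Rightarrow> real"
  assumes "0 < k"
    and deriv: "\<And>t. 0 \<le> t \<Longrightarrow> (v has_real_derivative v' t) (at t within {0..})"
    and nonneg: "\<And>t. 0 \<le> t \<Longrightarrow> 0 \<le> v t"
    and decay: "\<And>t. 0 \<le> t \<Longrightarrow> v' t \<le> - k * (v t)\<^sup>2"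
  shows "(v \<longlongrightarrow> 0) at_top"
proof (rule order_tendstoI)
  fix \<epsilon> :: real assume "0 < \<epsilon>"
  have v'_nonpos: "v' t \<le> 0" if "0 \<le> t" for t
  proof -
    have "0 \<le> k * (v t)\<^sup>2"
      using \<open>0 < k\<close> by simp
    then show ?thesis
      using decay[OF that] by linarith
  qed
  have decreasing: "v t \<le> v s" if "0 \<le> s" "s \<le> t" for s t
    by (rule DERIV_within_nonpos_imp_decreasing[where S = "{0..}" and f' = v'])
      (use that v'_nonpos in \<open>auto intro: deriv\<close>)
  define T where "T = v 0 / (k * \<epsilon>\<^sup>2) + 1"
  have "0 \<le> T"
    using nonneg[of 0] \<open>0 < k\<close> by (simp add: T_def)
  have "v T < \<epsilon>"
  proof (rule ccontr)
    assume "\<not> v T < \<epsilon>"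
    then have above: "\<epsilon> \<le> v t" if "0 \<le> t" "t \<le> T" for t
      using decreasing[OF that] by linarith
    have "v T - v 0 \<le> - (k * \<epsilon>\<^sup>2) * (T - 0)"
    proof (rule DERIV_within_le_imp_increment_le[OF \<open>0 \<le> T\<close>, where S = "{0..}" and f' = v'])
      fix t assume "0 < t" "t < T"
      then have "\<epsilon>\<^sup>2 \<le> (v t)\<^sup>2"
        using above[of t] \<open>0 < \<epsilon>\<close> by (intro power_mono) auto
      then have "k * \<epsilon>\<^sup>2 \<le> k * (v t)\<^sup>2"
        using \<open>0 < k\<close> by (intro mult_left_mono) auto
      then show "v' t \<le> - (k * \<epsilon>\<^sup>2)"
        using decay[of t] \<open>0 < t\<close> by linarith
    qed (auto intro: deriv)
    moreover have "- (k * \<epsilon>\<^sup>2) * (T - 0) = - v 0 - k * \<epsilon>\<^sup>2"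
      using \<open>0 < k\<close> \<open>0 < \<epsilon>\<close> by (simp add: T_def field_simps)
    moreover have "0 < k * \<epsilon>\<^sup>2"
      using \<open>0 < k\<close> \<open>0 < \<epsilon>\<close> by simp
    ultimately show False
      using nonneg[OF \<open>0 \<le> T\<close>] by linarith
  qed
  then have "\<forall>t\<ge>T. v t < \<epsilon>"
    using decreasing \<open>0 \<le> T\<close> by (meson order.strict_trans1)
  then show "\<forall>\<^sub>F t in at_top. v t < \<epsilon>"
    unfolding eventually_at_top_linorder by blast
next
  fix \<epsilon> :: real assume "\<epsilon> < 0"
  then show "\<forall>\<^sub>F t in at_top. \<epsilon> < v t"
    using nonneg by (auto simp: eventually_at_top_linorder intro: less_le_trans)
qed

lemma mult_le_sum_squares:
  fixes x y :: real
  shows "x * y \<le> x\<^sup>2 + y\<^sup>2"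
proof -
  have "2 * (x * y) \<le> x\<^sup>2 + y\<^sup>2"
    using sum_squares_bound[of x y] by (simp add: mult.assoc)
  then show ?thesis
    using sum_power2_ge_zero[of x y] by linarith
qed

lemma norm_le_fst_plus_snd:
  fixes z :: "real \<times> real"
  assumes "0 \<le> fst z" and "0 \<le> snd z"
  shows "norm z \<le> fst z + snd z"
proof -
  have "norm z = sqrt ((fst z)\<^sup>2 + (snd z)\<^sup>2)"
    by (simp add: norm_prod_def)
  also have "\<dots> \<le> sqrt ((fst z + snd z)\<^sup>2)"
    using assms by (intro real_sqrt_le_mono) (simp add: power2_sum)
  also have "\<dots> = fst z + snd z"
    using assms by simp
  finally show ?thesis .
qed

lemma fst_plus_snd_le_norm:
  fixes z :: "real \<times> real"
  shows "fst z + snd z \<le> 2 * norm z"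
  using norm_fst_le[of "fst z" "snd z"] norm_snd_le[of "snd z" "fst z"] by simp

section \<open>Solutions and forward invariance of \<open>\<Omega>\<close>\<close>

lemma solution_DERIV_fst:
  assumes "is_solution F x" and "0 \<le> t"
  shows "((\<lambda>t. fst (x t)) has_real_derivative fst (F (x t))) (at t within {0..})"
  using assms by (auto simp: is_solution_def intro: has_vector_derivative_fst)

lemma solution_DERIV_snd:
  assumes "is_solution F x" and "0 \<le> t"
  shows "((\<lambda>t. snd (x t)) has_real_derivative snd (F (x t))) (at t within {0..})"
  using assms by (auto simp: is_solution_def intro: has_vector_derivative_snd)

lemma solution_bounded:
  assumes "is_solution F x"
  shows "bounded (x ` {0..T})"
proof -
  have "continuous_on {0..T} x"
    unfolding continuous_on_eq_continuous_within
  proof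
    fix t assume "t \<in> {0..T}"
    then have "(x has_vector_derivative F (x t)) (at t within {0..})"
      using assms by (auto simp: is_solution_def)
    then show "continuous (at t within {0..T}) x"
      by (rule continuous_within_subset[OF has_vector_derivative_continuous]) auto
  qed
  then show ?thesis
    by (rule compact_imp_bounded[OF compact_continuous_image[OF _ compact_Icc]])
qed

lemma pm_field_Pair:
  "pm_field r \<alpha> K \<delta> \<sigma> (p, m) =
     (r * m * (1 - (p + m) / K) - \<delta> * p, \<alpha> * r * p * (1 - (p + m) / K) - \<sigma> * m)"
  by (simp add: pm_field_def)

definition omega_penalty :: "real \<Rightarrow> real \<times> real \<Rightarrow> real" where
  "omega_penalty K z = (max (- fst z) 0)\<^sup>2 + (max (- snd z) 0)\<^sup>2 + (max (fst z + snd z - K) 0)\<^sup>2"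

lemma omega_penalty_nonneg: "0 \<le> omega_penalty K z"
  by (simp add: omega_penalty_def)

lemma omega_penalty_eq_0_iff: "omega_penalty K z = 0 \<longleftrightarrow> z \<in> Omega K"
  by (auto simp: omega_penalty_def Omega_def case_prod_beta add_nonneg_eq_0_iff max_def)

lemma solution_omega_penalty_DERIV:
  assumes "is_solution F x" and "0 \<le> t"
  shows "((\<lambda>t. omega_penalty K (x t)) has_real_derivative
      2 * (- max (- fst (x t)) 0 * fst (F (x t)) - max (- snd (x t)) 0 * snd (F (x t))
        + max (fst (x t) + snd (x t) - K) 0 * (fst (F (x t)) + snd (F (x t)))))
    (at t within {0..})"
proof -
  note fst' = solution_DERIV_fst[OF assms] and snd' = solution_DERIV_snd[OF assms]
  have "((\<lambda>t. (max (- fst (x t)) 0)\<^sup>2) has_real_derivative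
      2 * max (- fst (x t)) 0 * - fst (F (x t))) (at t within {0..})"
    by (rule DERIV_chain2[OF DERIV_max0_square DERIV_minus[OF fst']])
  moreover have "((\<lambda>t. (max (- snd (x t)) 0)\<^sup>2) has_real_derivative
      2 * max (- snd (x t)) 0 * - snd (F (x t))) (at t within {0..})"
    by (rule DERIV_chain2[OF DERIV_max0_square DERIV_minus[OF snd']])
  moreover have "((\<lambda>t. (max (fst (x t) + snd (x t) - K) 0)\<^sup>2) has_real_derivative
      2 * max (fst (x t) + snd (x t) - K) 0 * (fst (F (x t)) + snd (F (x t)))) (at t within {0..})"
    by (rule DERIV_chain2[OF DERIV_max0_square]) (auto intro!: derivative_eq_intros fst' snd')
  ultimately show ?thesis
    unfolding omega_penalty_def by (rule DERIV_cong[OF DERIV_add[OF DERIV_add]]) (simp add: algebra_simps)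
qed

text \<open>
  In the applications \<open>x\<close> and \<open>z\<close> are two of the constraint violations and \<open>y \<ge> -z\<close> is a
  state coordinate; below the line \<open>p + m = K\<close> the logistic factor is at most \<open>1 + 2B/K\<close>,
  above it equals \<open>-max (p + m - K) 0 / K\<close>.
\<close>

lemma logistic_cross_term_le:
  fixes k r K B p m x y z :: real
  assumes "0 \<le> k" "k \<le> r" "0 < K" "\<bar>p\<bar> \<le> B" "\<bar>m\<bar> \<le> B"
    and "0 \<le> x" "0 \<le> z" "- y \<le> z" "y \<le> B"
  shows "- k * (1 - (p + m) / K) * (x * y)
    \<le> r * (1 + 2 * B / K) * (x * z) + r * B / K * (x * max (p + m - K) 0)"
proof -
  define u where "u = 1 - (p + m) / K"
  define c where "c = max (p + m - K) 0"
  have "0 \<le> B" "0 \<le> c"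
    using assms(4) by (auto simp: c_def)
  then have nonneg: "0 \<le> r * (1 + 2 * B / K) * (x * z)" "0 \<le> r * B / K * (x * c)"
    using assms by auto
  show ?thesis
    unfolding u_def[symmetric] c_def[symmetric]
  proof (cases "0 \<le> u")
    case True
    have "- (p + m) / K \<le> 2 * B / K"
      using assms(3-5) by (intro divide_right_mono) auto
    then have "u \<le> 1 + 2 * B / K"
      using assms(3) by (simp add: u_def field_simps)
    then have "k * u \<le> r * (1 + 2 * B / K)"
      using True assms(1,2) by (intro mult_mono) auto
    then have "(k * u) * (x * z) \<le> r * (1 + 2 * B / K) * (x * z)"
      using assms(6,7) by (intro mult_right_mono) auto
    moreover have "(k * u) * (x * - y) \<le> (k * u) * (x * z)"
      using True assms by (intro mult_left_mono) auto
    ultimately show "- k * u * (x * y) \<le> r * (1 + 2 * B / K) * (x * z) + r * B / K * (x * c)"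
      using nonneg(2) by simp
  next
    case False
    then have "c = - K * u"
      using assms(3) by (auto simp: c_def u_def max_def field_simps)
    then have "- k * u * (x * y) = (k / K) * (x * c) * y"
      using assms(3) by (simp add: field_simps)
    also have "\<dots> \<le> (k / K) * (x * c) * B"
      using assms \<open>0 \<le> c\<close> by (intro mult_left_mono) auto
    also have "\<dots> = (k * B / K) * (x * c)"
      by simp
    also have "\<dots> \<le> r * B / K * (x * c)"
      using assms \<open>0 \<le> B\<close> \<open>0 \<le> c\<close> by (intro mult_right_mono divide_right_mono) auto
    finally show "- k * u * (x * y) \<le> r * (1 + 2 * B / K) * (x * z) + r * B / K * (x * c)"
      using nonneg(1) by simp
  qed
qed

lemma crowding_term_le:
  fixes r \<alpha> K B p m :: real
  assumes "0 \<le> r" "0 \<le> \<alpha>" "\<alpha> \<le> 1" "0 < K" "\<bar>p\<bar> \<le> B" "\<bar>m\<bar> \<le> B"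
  defines "c \<equiv> max (p + m - K) 0"
  shows "c * (1 - (p + m) / K) * (r * m + \<alpha> * r * p) \<le> 2 * (r * B / K) * c\<^sup>2"
proof -
  define u where "u = 1 - (p + m) / K"
  have "\<alpha> * \<bar>p\<bar> \<le> B"
    using assms(2,3,5) mult_right_mono[of \<alpha> 1 "\<bar>p\<bar>"] by simp
  then have "- (\<alpha> * p) \<le> B"
    using assms(2) abs_ge_minus_self[of p] mult_left_mono[of "- p" "\<bar>p\<bar>" \<alpha>] by simp
  then have "r * (- m) + r * (- (\<alpha> * p)) \<le> r * B + r * B"
    using assms(1,6) by (intro add_mono mult_left_mono) auto
  then have "c\<^sup>2 / K * - (r * m + \<alpha> * r * p) \<le> c\<^sup>2 / K * (2 * r * B)"
    using assms(4) by (intro mult_left_mono) (auto simp: algebra_simps)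
  moreover have "c * u = - c\<^sup>2 / K"
    using assms(4) by (auto simp: c_def u_def max_def field_simps power2_eq_square)
  then have "c * u * (r * m + \<alpha> * r * p) = c\<^sup>2 / K * - (r * m + \<alpha> * r * p)"
    by (simp add: algebra_simps)
  moreover have "c\<^sup>2 / K * (2 * r * B) = 2 * (r * B / K) * c\<^sup>2"
    by simp
  ultimately show ?thesis
    unfolding u_def[symmetric] by linarith
qed

lemma omega_penalty_slope_le:
  fixes r \<alpha> K \<delta> \<sigma> B p m :: real
  assumes "0 \<le> r" "0 \<le> \<alpha>" "\<alpha> \<le> 1" "0 < K" "0 \<le> \<delta>" "0 \<le> \<sigma>" "\<bar>p\<bar> \<le> B" "\<bar>m\<bar> \<le> B"
  defines "a \<equiv> max (- p) 0" and "b \<equiv> max (- m) 0" and "c \<equiv> max (p + m - K) 0"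
    and "P \<equiv> fst (pm_field r \<alpha> K \<delta> \<sigma> (p, m))" and "M \<equiv> snd (pm_field r \<alpha> K \<delta> \<sigma> (p, m))"
  shows "- a * P - b * M + c * (P + M) \<le> (\<delta> + \<sigma> + 2 * r * (1 + 4 * B / K)) * (a\<^sup>2 + b\<^sup>2 + c\<^sup>2)"
proof -
  define u where "u = 1 - (p + m) / K"
  define N where "N = a\<^sup>2 + b\<^sup>2 + c\<^sup>2"
  define C where "C = r * (1 + 2 * B / K)"
  define D where "D = r * B / K"
  have abc: "0 \<le> a" "0 \<le> b" "0 \<le> c" "- p \<le> a" "- m \<le> b" "a * p = - a\<^sup>2" "b * m = - b\<^sup>2"
    by (auto simp: a_def b_def c_def max_def power2_eq_square)
  have CD: "0 \<le> C" "0 \<le> D"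
    using assms(1,4,7) by (simp_all add: C_def D_def)
  have "- a * P - b * M + c * (P + M) =
      - r * u * (a * m) - \<alpha> * r * u * (b * p) + c * u * (r * m + \<alpha> * r * p)
      + \<delta> * (a * p) + \<sigma> * (b * m) - \<delta> * (c * p) - \<sigma> * (c * m)"
    using assms(4) by (simp add: P_def M_def pm_field_Pair u_def field_simps)
  moreover have "- r * u * (a * m) \<le> C * (a * b) + D * (a * c)"
    unfolding u_def C_def D_def c_def
    by (rule logistic_cross_term_le) (use abc assms(1,4,7,8) in auto)
  moreover have "- \<alpha> * r * u * (b * p) \<le> C * (a * b) + D * (b * c)"
  proof -
    have "- (\<alpha> * r) * u * (b * p) \<le> C * (b * a) + D * (b * c)"
      unfolding u_def C_def D_def c_def
      by (rule logistic_cross_term_le) (use abc assms(1-4,7,8) mult_right_mono[of \<alpha> 1 r] in auto)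
    then show ?thesis
      by (simp add: mult.commute)
  qed
  moreover have "c * u * (r * m + \<alpha> * r * p) \<le> 2 * D * c\<^sup>2"
    unfolding u_def D_def c_def using crowding_term_le[OF assms(1-4,7,8)] .
  moreover have "- \<delta> * (c * p) \<le> \<delta> * (a * c)" "- \<sigma> * (c * m) \<le> \<sigma> * (b * c)"
    using mult_left_mono[OF mult_left_mono[OF abc(4) abc(3)] assms(5)]
      mult_left_mono[OF mult_left_mono[OF abc(5) abc(3)] assms(6)]
    by (simp_all add: ac_simps)
  moreover have "\<delta> * (a * p) \<le> 0" "\<sigma> * (b * m) \<le> 0"
    using abc(6,7) assms(5,6) by (simp_all add: mult_nonneg_nonpos)
  moreover have "a * b \<le> N" "a * c \<le> N" "b * c \<le> N" "c\<^sup>2 \<le> N"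
    using mult_le_sum_squares[of a b] mult_le_sum_squares[of a c] mult_le_sum_squares[of b c]
      zero_le_power2[of a] zero_le_power2[of b] zero_le_power2[of c]
    unfolding N_def by linarith+
  then have "C * (a * b) \<le> C * N" "D * (a * c) \<le> D * N" "D * (b * c) \<le> D * N"
    "D * c\<^sup>2 \<le> D * N" "\<delta> * (a * c) \<le> \<delta> * N" "\<sigma> * (b * c) \<le> \<sigma> * N"
    using CD assms(5,6) by (simp_all add: mult_left_mono)
  moreover have "(\<delta> + \<sigma> + 2 * r * (1 + 4 * B / K)) * N = \<delta> * N + \<sigma> * N + 2 * (C * N) + 4 * (D * N)"
    by (simp add: C_def D_def algebra_simps)
  ultimately show ?thesis
    unfolding N_def by linarith
qed

lemma Omega_invariant:
  fixes r \<alpha> K \<delta> \<sigma> :: real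
  assumes "0 \<le> r" "0 \<le> \<alpha>" "\<alpha> \<le> 1" "0 < K" "0 \<le> \<delta>" "0 \<le> \<sigma>"
    and sol: "is_solution (pm_field r \<alpha> K \<delta> \<sigma>) x" and "x 0 \<in> Omega K" and "0 \<le> T"
  shows "x T \<in> Omega K"
proof -
  from solution_bounded[OF sol, of T] obtain B where B: "\<And>t. t \<in> {0..T} \<Longrightarrow> norm (x t) \<le> B"
    unfolding bounded_iff by blast
  define L where "L = \<delta> + \<sigma> + 2 * r * (1 + 4 * B / K)"
  define F where "F = pm_field r \<alpha> K \<delta> \<sigma>"
  define N' where "N' t = 2 * (- max (- fst (x t)) 0 * fst (F (x t)) - max (- snd (x t)) 0 * snd (F (x t))
      + max (fst (x t) + snd (x t) - K) 0 * (fst (F (x t)) + snd (F (x t))))" for t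
  have "omega_penalty K (x T) \<le> omega_penalty K (x 0) * exp (2 * L * (T - 0))"
  proof (rule differential_gronwall[where S = "{0..}" and f' = N'])
    fix t assume "t \<in> {0..T}"
    then show "((\<lambda>t. omega_penalty K (x t)) has_real_derivative N' t) (at t within {0..})"
      unfolding N'_def using solution_omega_penalty_DERIV[OF sol[folded F_def]] by simp
  next
    fix t assume t: "0 < t" "t < T"
    obtain p m where xt: "x t = (p, m)"
      by fastforce
    have "\<bar>p\<bar> \<le> B" "\<bar>m\<bar> \<le> B"
      using B[of t] t xt norm_fst_le[of p m] norm_snd_le[of m p] by auto
    from omega_penalty_slope_le[OF assms(1-6) this]
    have "N' t / 2 \<le> L * omega_penalty K (x t)"
      by (simp add: N'_def F_def xt omega_penalty_def L_def)
    then show "N' t \<le> 2 * L * omega_penalty K (x t)"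
      by simp
  qed (use \<open>0 \<le> T\<close> in auto)
  also have "\<dots> = 0"
    using \<open>x 0 \<in> Omega K\<close> omega_penalty_eq_0_iff by simp
  finally show ?thesis
    using omega_penalty_nonneg[of K "x T"] omega_penalty_eq_0_iff by simp
qed

section \<open>The Lyapunov function\<close>

lemma R0_le_1_imp_le:
  fixes r \<alpha> \<delta> \<sigma> :: real
  assumes "0 \<le> r" and "0 \<le> \<alpha>" and "0 < \<delta>" and "0 < \<sigma>" and "r * sqrt (\<alpha> / (\<delta> * \<sigma>)) \<le> 1"
  shows "\<alpha> * r\<^sup>2 \<le> \<sigma> * \<delta>"
proof -
  have "r\<^sup>2 * (\<alpha> / (\<delta> * \<sigma>)) = (r * sqrt (\<alpha> / (\<delta> * \<sigma>)))\<^sup>2"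
    using assms by (simp add: power_mult_distrib)
  also have "\<dots> \<le> 1"
    using assms by (intro power_le_one) auto
  finally show ?thesis
    using assms(3,4) by (simp add: field_simps)
qed

definition pm_lyapunov :: "real \<Rightarrow> real \<Rightarrow> real \<times> real \<Rightarrow> real" where
  "pm_lyapunov \<sigma> r z = \<sigma> * fst z + r * snd z"

lemma solution_pm_lyapunov_DERIV:
  assumes "is_solution F x" and "0 \<le> t"
  shows "((\<lambda>t. pm_lyapunov \<sigma> r (x t)) has_real_derivative pm_lyapunov \<sigma> r (F (x t))) (at t within {0..})"
  unfolding pm_lyapunov_def
  by (intro DERIV_add DERIV_cmult solution_DERIV_fst[OF assms] solution_DERIV_snd[OF assms])

lemma pm_lyapunov_nonneg:
  assumes "0 \<le> \<sigma>" and "0 \<le> r" and "z \<in> Omega K"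
  shows "0 \<le> pm_lyapunov \<sigma> r z"
  using assms by (auto simp: pm_lyapunov_def Omega_def)

lemma pm_lyapunov_bounds:
  assumes "0 \<le> \<sigma>" and "0 \<le> r" and "z \<in> Omega K"
  shows "min \<sigma> r * norm z \<le> pm_lyapunov \<sigma> r z"
    and "pm_lyapunov \<sigma> r z \<le> max \<sigma> r * (fst z + snd z)"
proof -
  have nonneg: "0 \<le> fst z" "0 \<le> snd z"
    using assms(3) by (auto simp: Omega_def)
  have "min \<sigma> r * (fst z + snd z) \<le> pm_lyapunov \<sigma> r z"
    using nonneg mult_right_mono[of "min \<sigma> r" \<sigma> "fst z"] mult_right_mono[of "min \<sigma> r" r "snd z"]
    by (simp add: pm_lyapunov_def distrib_left)
  then show "min \<sigma> r * norm z \<le> pm_lyapunov \<sigma> r z"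
    using norm_le_fst_plus_snd[OF nonneg] assms(1,2) mult_left_mono[of "norm z" "fst z + snd z" "min \<sigma> r"]
    by linarith
  show "pm_lyapunov \<sigma> r z \<le> max \<sigma> r * (fst z + snd z)"
    using nonneg mult_right_mono[of \<sigma> "max \<sigma> r" "fst z"] mult_right_mono[of r "max \<sigma> r" "snd z"]
    by (simp add: pm_lyapunov_def distrib_left)
qed

lemma pm_lyapunov_slope_le:
  fixes r \<alpha> K \<delta> \<sigma> p m :: real
  assumes "0 \<le> r" "0 \<le> \<alpha>" "0 < K" "0 \<le> \<sigma>" "\<alpha> * r\<^sup>2 \<le> \<sigma> * \<delta>" "(p, m) \<in> Omega K"
  shows "pm_lyapunov \<sigma> r (pm_field r \<alpha> K \<delta> \<sigma> (p, m)) \<le> - (min (\<sigma> * r) (\<alpha> * r\<^sup>2) / K) * (p + m)\<^sup>2"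
proof -
  define \<mu> where "\<mu> = min (\<sigma> * r) (\<alpha> * r\<^sup>2)"
  have pm: "0 \<le> p" "0 \<le> m"
    using assms(6) by (auto simp: Omega_def)
  have "\<mu> * (p + m) \<le> \<sigma> * r * m + \<alpha> * r\<^sup>2 * p"
    using pm mult_right_mono[of \<mu> "\<sigma> * r" m] mult_right_mono[of \<mu> "\<alpha> * r\<^sup>2" p]
    by (simp add: \<mu>_def distrib_left)
  then have "(p + m) / K * (\<mu> * (p + m)) \<le> (p + m) / K * (\<sigma> * r * m + \<alpha> * r\<^sup>2 * p)"
    using pm assms(3) by (intro mult_left_mono) auto
  moreover have "p * (\<alpha> * r\<^sup>2 - \<sigma> * \<delta>) \<le> 0"
    using pm assms(5) by (simp add: mult_nonneg_nonpos)
  moreover have "pm_lyapunov \<sigma> r (pm_field r \<alpha> K \<delta> \<sigma> (p, m))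
      = p * (\<alpha> * r\<^sup>2 - \<sigma> * \<delta>) - (p + m) / K * (\<sigma> * r * m + \<alpha> * r\<^sup>2 * p)"
    by (simp add: pm_lyapunov_def pm_field_Pair power2_eq_square algebra_simps)
  moreover have "(p + m) / K * (\<mu> * (p + m)) = \<mu> / K * (p + m)\<^sup>2"
    by (simp add: power2_eq_square)
  ultimately show ?thesis
    unfolding \<mu>_def by linarith
qed

lemma pm_lyapunov_slope_le_square:
  fixes r \<alpha> K \<delta> \<sigma> :: real
  assumes "0 \<le> r" "0 \<le> \<alpha>" "0 < K" "0 \<le> \<sigma>" "\<alpha> * r\<^sup>2 \<le> \<sigma> * \<delta>" "z \<in> Omega K"
  shows "pm_lyapunov \<sigma> r (pm_field r \<alpha> K \<delta> \<sigma> z)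
    \<le> - (min (\<sigma> * r) (\<alpha> * r\<^sup>2) / (K * (max \<sigma> r)\<^sup>2)) * (pm_lyapunov \<sigma> r z)\<^sup>2"
proof -
  obtain p m where z: "z = (p, m)"
    by fastforce
  define \<mu> where "\<mu> = min (\<sigma> * r) (\<alpha> * r\<^sup>2)"
  have "0 \<le> pm_lyapunov \<sigma> r z"
    using assms(4,1,6) by (rule pm_lyapunov_nonneg)
  then have "(pm_lyapunov \<sigma> r z)\<^sup>2 \<le> (max \<sigma> r)\<^sup>2 * (p + m)\<^sup>2"
    using pm_lyapunov_bounds(2)[OF assms(4,1,6)] by (simp add: z power_mult_distrib[symmetric] power_mono)
  then have "\<mu> / (K * (max \<sigma> r)\<^sup>2) * (pm_lyapunov \<sigma> r z)\<^sup>2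
      \<le> \<mu> / (K * (max \<sigma> r)\<^sup>2) * ((max \<sigma> r)\<^sup>2 * (p + m)\<^sup>2)"
    using assms(1-4) by (intro mult_left_mono) (auto simp: \<mu>_def)
  also have "\<dots> \<le> \<mu> / K * (p + m)\<^sup>2"
    using assms(1-4) by (cases "max \<sigma> r = 0") (auto simp: \<mu>_def)
  moreover have "pm_lyapunov \<sigma> r (pm_field r \<alpha> K \<delta> \<sigma> z) \<le> - (\<mu> / K) * (p + m)\<^sup>2"
    using pm_lyapunov_slope_le[OF assms(1-5)] assms(6) unfolding z \<mu>_def by blast
  ultimately show ?thesis
    unfolding \<mu>_def by linarith
qed

context
  fixes r \<alpha> K \<delta> \<sigma> :: real
  assumes parameters: "0 < r" "0 < \<alpha>" "\<alpha> \<le> 1" "0 < K" "0 < \<delta>" "0 < \<sigma>"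
    and R0_le_1: "\<alpha> * r\<^sup>2 \<le> \<sigma> * \<delta>"
begin

lemma pm_lyapunov_decreasing:
  assumes sol: "is_solution (pm_field r \<alpha> K \<delta> \<sigma>) x" and "x 0 \<in> Omega K" and "0 \<le> s" and "s \<le> t"
  shows "pm_lyapunov \<sigma> r (x t) \<le> pm_lyapunov \<sigma> r (x s)"
proof (rule DERIV_within_nonpos_imp_decreasing[OF \<open>s \<le> t\<close>, of "{0..}"])
  fix \<tau> assume "\<tau> \<in> {s..t}"
  then show "((\<lambda>t. pm_lyapunov \<sigma> r (x t)) has_real_derivative
      pm_lyapunov \<sigma> r (pm_field r \<alpha> K \<delta> \<sigma> (x \<tau>))) (at \<tau> within {0..})"
    using \<open>0 \<le> s\<close> by (intro solution_pm_lyapunov_DERIV[OF sol]) auto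
next
  fix \<tau> assume "s < \<tau>" "\<tau> < t"
  then have "x \<tau> \<in> Omega K"
    using Omega_invariant[OF _ _ _ _ _ _ assms(1,2)] parameters \<open>0 \<le> s\<close> by auto
  then have "pm_lyapunov \<sigma> r (pm_field r \<alpha> K \<delta> \<sigma> (x \<tau>))
      \<le> - (min (\<sigma> * r) (\<alpha> * r\<^sup>2) / (K * (max \<sigma> r)\<^sup>2)) * (pm_lyapunov \<sigma> r (x \<tau>))\<^sup>2"
    using parameters R0_le_1 by (intro pm_lyapunov_slope_le_square) auto
  moreover have "0 \<le> min (\<sigma> * r) (\<alpha> * r\<^sup>2) / (K * (max \<sigma> r)\<^sup>2) * (pm_lyapunov \<sigma> r (x \<tau>))\<^sup>2"
    using parameters by simp
  ultimately show "pm_lyapunov \<sigma> r (pm_field r \<alpha> K \<delta> \<sigma> (x \<tau>)) \<le> 0"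
    by linarith
qed (use \<open>0 \<le> s\<close> in auto)

lemma pm_stable: "stable_in (pm_field r \<alpha> K \<delta> \<sigma>) (Omega K) (0, 0)"
  unfolding stable_in_def
proof (intro allI impI)
  fix \<epsilon> :: real assume "0 < \<epsilon>"
  define \<eta> where "\<eta> = \<epsilon> * min \<sigma> r / (2 * max \<sigma> r)"
  have "0 < \<eta>"
    using \<open>0 < \<epsilon>\<close> parameters by (simp add: \<eta>_def)
  moreover have "dist (x t) (0, 0) < \<epsilon>"
    if "is_solution (pm_field r \<alpha> K \<delta> \<sigma>) x \<and> x 0 \<in> Omega K \<and> dist (x 0) (0, 0) < \<eta>" and "0 \<le> t"
    for x t
  proof -
    have sol: "is_solution (pm_field r \<alpha> K \<delta> \<sigma>) x" and x0: "x 0 \<in> Omega K"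
      and near: "norm (x 0) < \<eta>"
      using that by (auto simp: dist_norm zero_prod_def[symmetric])
    have "x t \<in> Omega K"
      using Omega_invariant[OF _ _ _ _ _ _ sol x0 \<open>0 \<le> t\<close>] parameters by auto
    then have "min \<sigma> r * norm (x t) \<le> pm_lyapunov \<sigma> r (x t)"
      using parameters by (intro pm_lyapunov_bounds) auto
    also have "\<dots> \<le> pm_lyapunov \<sigma> r (x 0)"
      using pm_lyapunov_decreasing[OF sol x0 order_refl \<open>0 \<le> t\<close>] .
    also have "\<dots> \<le> max \<sigma> r * (fst (x 0) + snd (x 0))"
      using parameters x0 by (intro pm_lyapunov_bounds) auto
    also have "\<dots> \<le> max \<sigma> r * (2 * norm (x 0))"
      using parameters fst_plus_snd_le_norm[of "x 0"] by (intro mult_left_mono) auto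
    also have "\<dots> < max \<sigma> r * (2 * \<eta>)"
      using parameters near by (intro mult_strict_left_mono) auto
    also have "\<dots> = min \<sigma> r * \<epsilon>"
      using parameters by (simp add: \<eta>_def)
    finally show ?thesis
      using parameters by (simp add: dist_norm zero_prod_def[symmetric])
  qed
  ultimately show "\<exists>\<eta>>0. \<forall>x. is_solution (pm_field r \<alpha> K \<delta> \<sigma>) x \<and> x 0 \<in> Omega K \<and> dist (x 0) (0, 0) < \<eta>
      \<longrightarrow> (\<forall>t\<ge>0. dist (x t) (0, 0) < \<epsilon>)"
    by blast
qed

lemma pm_globally_attractive: "globally_attractive_in (pm_field r \<alpha> K \<delta> \<sigma>) (Omega K) (0, 0)"
  unfolding globally_attractive_in_def
proof (intro allI impI)
  fix x assume "is_solution (pm_field r \<alpha> K \<delta> \<sigma>) x \<and> x 0 \<in> Omega K"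
  then have sol: "is_solution (pm_field r \<alpha> K \<delta> \<sigma>) x" and x0: "x 0 \<in> Omega K"
    by auto
  have inv: "x t \<in> Omega K" if "0 \<le> t" for t
    using Omega_invariant[OF _ _ _ _ _ _ sol x0 that] parameters by auto
  have bound: "min \<sigma> r * norm (x t) \<le> pm_lyapunov \<sigma> r (x t)" if "0 \<le> t" for t
    using parameters inv[OF that] by (intro pm_lyapunov_bounds) auto
  have "((\<lambda>t. pm_lyapunov \<sigma> r (x t)) \<longlongrightarrow> 0) at_top"
  proof (rule tendsto_zero_of_DERIV_le_neg_square[OF _ solution_pm_lyapunov_DERIV[OF sol]])
    show "0 < min (\<sigma> * r) (\<alpha> * r\<^sup>2) / (K * (max \<sigma> r)\<^sup>2)"
      using parameters by simp
  next
    fix t :: real assume "0 \<le> t"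
    show "0 \<le> pm_lyapunov \<sigma> r (x t)"
      using parameters inv[OF \<open>0 \<le> t\<close>] by (intro pm_lyapunov_nonneg) auto
    show "pm_lyapunov \<sigma> r (pm_field r \<alpha> K \<delta> \<sigma> (x t))
        \<le> - (min (\<sigma> * r) (\<alpha> * r\<^sup>2) / (K * (max \<sigma> r)\<^sup>2)) * (pm_lyapunov \<sigma> r (x t))\<^sup>2"
      using parameters R0_le_1 inv[OF \<open>0 \<le> t\<close>] by (intro pm_lyapunov_slope_le_square) auto
  qed
  then have "((\<lambda>t. pm_lyapunov \<sigma> r (x t) / min \<sigma> r) \<longlongrightarrow> 0) at_top"
    by (rule tendsto_divide_zero)
  moreover have "\<forall>\<^sub>F t in at_top. norm (x t) \<le> pm_lyapunov \<sigma> r (x t) / min \<sigma> r"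
    using bound parameters by (auto simp: eventually_at_top_linorder field_simps intro!: exI[of _ 0])
  ultimately have "(x \<longlongrightarrow> 0) at_top"
    by (rule Lim_null_comparison[rotated])
  then show "(x \<longlongrightarrow> (0, 0)) at_top"
    by (simp add: zero_prod_def)
qed

end

theorem mainTheorem3:
  fixes r \<alpha> K \<delta> \<sigma> :: real
  assumes "r > 0" and "0 < \<alpha>" and "\<alpha> \<le> 1" and "K > 0" and "\<delta> > 0" and "\<sigma> > 0"
    and "r * sqrt (\<alpha> / (\<delta> * \<sigma>)) \<le> 1"
  shows "globally_asymptotically_stable_in (pm_field r \<alpha> K \<delta> \<sigma>) (Omega K) (0, 0)"
proof -
  have R0: "\<alpha> * r\<^sup>2 \<le> \<sigma> * \<delta>"
    using assms by (intro R0_le_1_imp_le) auto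
  have "(0, 0) \<in> Omega K"
    using \<open>K > 0\<close> by (simp add: Omega_def)
  moreover have "is_equilibrium (pm_field r \<alpha> K \<delta> \<sigma>) (0, 0)"
    by (simp add: is_equilibrium_def pm_field_Pair zero_prod_def)
  ultimately show ?thesis
    unfolding globally_asymptotically_stable_in_def
    using pm_stable[OF assms(1-6) R0] pm_globally_attractive[OF assms(1-6) R0] by blast
qed

end
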